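(* Let $\mathcal A\colon\bigcup_{n,m\ge1}Z^{(n,m)}\to\mathcal F$ be any representation learner and $\alpha>0$, $\nu>0$. Then, with $(\mathbf z,\vec P)$ generated by the $(n,m)$-sampling process from the environment $Q$, $$\Pr\left\{(\mathbf z,\vec P):d_\nu\big(E^*_{\mathcal G}(\mathcal A(\mathbf z),\mathbf z),E^*_{\mathcal G}(\mathcal A(\mathbf z),\vec P)\big)>\alpha\right\}\le\Pr\left\{(\mathbf z,\vec P):\exists\,\vec g\in\mathcal G^n,f\in\mathcal F,\ d_\nu\big(E(\vec g\circ\bar f,\mathbf z),E(\vec g\circ\bar f,\vec P)\big)>\alpha\right\}.$$
   Context: $X,Y,A,V$ sets, $Z=X\times Y$, $\mathcal F$ maps $X\to V$, $\mathcal G$ maps $V\to A$, $l\colon Y\times A\to[0,M]$, $l_{g\circ f}(x,y)=l(y,g(f(x)))$. $Q$ is a probability measure on a set $\mathbb P$ of probability measures on $Z$ (with respect to which all $l_{g\circ f}$ are measurable). $(n,m)$-sampling: draw $\vec P=(P_1,\dots,P_n)$ independently according to $Q$, then for each $i$ draw $z_{i1},\dots,z_{im}$ independently from $P_i$, forming $\mathbf z=(z_{ij})\in Z^{(n,m)}$. $E^*_{\mathcal G}(f,\mathbf z)=\frac1n\sum_i\inf_{g\in\mathcal G}\frac1m\sum_j l_{g\circ f}(z_{ij})$; $E^*_{\mathcal G}(f,\vec P)=\frac1n\sum_i\inf_{g\in\mathcal G}\int l_{g\circ f}dP_i$. For $\vec g=(g_1,\dots,g_n)\in\mathcal G^n$: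 $E(\vec g\circ\bar f,\mathbf z)=\frac1{nm}\sum_{i,j}l_{g_i\circ f}(z_{ij})$, $E(\vec g\circ\bar f,\vec P)=\frac1n\sum_i\int l_{g_i\circ f}dP_i$. $d_\nu(x,y)=\frac{|x-y|}{\nu+x+y}$. All events are assumed measurable. *)

theory Defs
  imports "HOL-Probability.Probability"
begin

definition d_nu :: "real \<Rightarrow> real \<Rightarrow> real \<Rightarrow> real" where
  "d_nu \<nu> x y = \<bar>x - y\<bar> / (\<nu> + x + y)"

definition loss_comp :: "('y \<Rightarrow> 'a \<Rightarrow> real) \<Rightarrow> ('v \<Rightarrow> 'a) \<Rightarrow> ('x \<Rightarrow> 'v) \<Rightarrow> 'x \<times> 'y \<Rightarrow> real" where
  "loss_comp l g f z = l (snd z) (g (f (fst z)))"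

text \<open>A multisample z in Z^(n,m) is a function on {..<n} x {..<m};
  a vector of tasks P is a function on {..<n}.\<close>

definition Estar_emp ::
  "('y \<Rightarrow> 'a \<Rightarrow> real) \<Rightarrow> ('v \<Rightarrow> 'a) set \<Rightarrow> nat \<Rightarrow> nat \<Rightarrow> ('x \<Rightarrow> 'v) \<Rightarrow> (nat \<times> nat \<Rightarrow> 'x \<times> 'y) \<Rightarrow> real" where
  "Estar_emp l G n m f z =
     (1 / real n) * (\<Sum>i<n. (INF g\<in>G. (1 / real m) * (\<Sum>j<m. loss_comp l g f (z (i, j)))))"

definition Estar_true ::
  "('y \<Rightarrow> 'a \<Rightarrow> real) \<Rightarrow> ('v \<Rightarrow> 'a) set \<Rightarrow> nat \<Rightarrow> ('x \<Rightarrow> 'v) \<Rightarrow> (nat \<Rightarrow> ('x \<times> 'y) measure) \<Rightarrow> real" where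
  "Estar_true l G n f Ps =
     (1 / real n) * (\<Sum>i<n. (INF g\<in>G. (\<integral>z. loss_comp l g f z \<partial>(Ps i))))"

definition E_emp ::
  "('y \<Rightarrow> 'a \<Rightarrow> real) \<Rightarrow> nat \<Rightarrow> nat \<Rightarrow> (nat \<Rightarrow> 'v \<Rightarrow> 'a) \<Rightarrow> ('x \<Rightarrow> 'v) \<Rightarrow> (nat \<times> nat \<Rightarrow> 'x \<times> 'y) \<Rightarrow> real" where
  "E_emp l n m gs f z =
     (1 / (real n * real m)) * (\<Sum>i<n. \<Sum>j<m. loss_comp l (gs i) f (z (i, j)))"

definition E_true ::
  "('y \<Rightarrow> 'a \<Rightarrow> real) \<Rightarrow> nat \<Rightarrow> (nat \<Rightarrow> 'v \<Rightarrow> 'a) \<Rightarrow> ('x \<Rightarrow> 'v) \<Rightarrow> (nat \<Rightarrow> ('x \<times> 'y) measure) \<Rightarrow> real" where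
  "E_true l n gs f Ps =
     (1 / real n) * (\<Sum>i<n. (\<integral>z. loss_comp l (gs i) f z \<partial>(Ps i)))"

definition sample_space ::
  "'z measure \<Rightarrow> 'z measure measure \<Rightarrow> nat \<Rightarrow> nat \<Rightarrow> ((nat \<times> nat \<Rightarrow> 'z) \<times> (nat \<Rightarrow> 'z measure)) measure" where
  "sample_space Mz Q n m =
     (PiM ({..<n} \<times> {..<m}) (\<lambda>_. Mz)) \<Otimes>\<^sub>M (PiM {..<n} (\<lambda>_. Q))"

definition nm_sampling ::
  "'z measure \<Rightarrow> 'z measure measure \<Rightarrow> nat \<Rightarrow> nat \<Rightarrow> ((nat \<times> nat \<Rightarrow> 'z) \<times> (nat \<Rightarrow> 'z measure)) measure" where
  "nm_sampling Mz Q n m =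
     PiM {..<n} (\<lambda>_. Q) \<bind> (\<lambda>Ps.
       PiM ({..<n} \<times> {..<m}) (\<lambda>ij. Ps (fst ij)) \<bind> (\<lambda>z.
         return (sample_space Mz Q n m) (z, Ps)))"

end

theory Submission
  imports Defs
begin

text \<open>
  Fix f = A(z); the event on the left is contained in the one on the right. For nonnegative
  x \<ge> y, d_nu(x, y) > \<alpha> is the strict linear inequality \<alpha>\<nu> < (1 - \<alpha>) x - (1 + \<alpha>) y, which
  forces \<alpha> < 1 and is increasing in x and decreasing in y. Choose for each task i some g_i \<in> G
  nearly attaining the infimum on the smaller side and evaluate both sides at g_i: the smaller
  side moves up only slightly and the larger side can only grow, so the inequality survives.
\<close>

definition gap_ratio :: "real \<Rightarrow> real \<Rightarrow> real \<Rightarrow> real" where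
  "gap_ratio \<nu> x y = (x - y) / (\<nu> + x + y)"

lemma d_nu_gt_iff_gap_ratio:
  assumes "0 \<le> x" "0 \<le> y" "0 < \<nu>"
  shows "\<alpha> < d_nu \<nu> x y \<longleftrightarrow> \<alpha> < gap_ratio \<nu> x y \<or> \<alpha> < gap_ratio \<nu> y x"
proof -
  have "d_nu \<nu> x y = \<bar>gap_ratio \<nu> x y\<bar>"
    using assms by (simp add: d_nu_def gap_ratio_def abs_divide)
  moreover have "gap_ratio \<nu> y x = - gap_ratio \<nu> x y"
    by (simp add: gap_ratio_def add.commute add.left_commute minus_divide_left)
  ultimately show ?thesis by auto
qed

lemma gap_ratio_gt_stable:
  fixes x y \<nu> \<alpha> :: real
  assumes "0 \<le> x" "0 \<le> y" "0 < \<nu>" "0 \<le> \<alpha>" and gap: "\<alpha> < gap_ratio \<nu> x y"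
  obtains \<delta> where "\<delta> > 0"
    and "\<And>x' y'. x \<le> x' \<Longrightarrow> y \<le> y' \<Longrightarrow> y' < y + \<delta> \<Longrightarrow> \<alpha> < gap_ratio \<nu> x' y'"
proof -
  define K where "K = x - y - \<alpha> * (\<nu> + x + y)"
  have "K > 0" using gap assms(1-3) by (simp add: K_def gap_ratio_def pos_less_divide_eq)
  have "\<alpha> < 1"
  proof (rule ccontr)
    assume "\<not> \<alpha> < 1"
    then have "\<nu> + x + y \<le> \<alpha> * (\<nu> + x + y)"
      using mult_right_mono[of 1 \<alpha> "\<nu> + x + y"] assms(1-3) by simp
    then show False using \<open>K > 0\<close> assms(2,3) unfolding K_def by linarith
  qed
  show thesis
  proof
    show "K / (1 + \<alpha>) > 0" using \<open>K > 0\<close> \<open>0 \<le> \<alpha>\<close> by simp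
    fix x' y' assume "x \<le> x'" "y \<le> y'" "y' < y + K / (1 + \<alpha>)"
    then have "(1 + \<alpha>) * y' < (1 + \<alpha>) * y + K" using \<open>0 \<le> \<alpha>\<close> by (simp add: field_simps)
    moreover have "(1 - \<alpha>) * x \<le> (1 - \<alpha>) * x'" using \<open>x \<le> x'\<close> \<open>\<alpha> < 1\<close> by simp
    ultimately have "\<alpha> * (\<nu> + x' + y') < x' - y'" unfolding K_def by (simp add: algebra_simps)
    then show "\<alpha> < gap_ratio \<nu> x' y'"
      using \<open>x \<le> x'\<close> \<open>y \<le> y'\<close> assms(1-3) by (simp add: gap_ratio_def pos_less_divide_eq)
  qed
qed

lemma sum_INF_choice_less:
  fixes b :: "'i \<Rightarrow> 'g \<Rightarrow> real"
  assumes "finite I" and "G \<noteq> {}" and bdd: "\<And>i. i \<in> I \<Longrightarrow> bdd_below (b i ` G)" and "\<epsilon> > 0"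
  obtains gs where "\<And>i. i \<in> I \<Longrightarrow> gs i \<in> G"
    and "(\<Sum>i\<in>I. b i (gs i)) < (\<Sum>i\<in>I. INF g\<in>G. b i g) + \<epsilon>"
proof -
  define \<delta> where "\<delta> = \<epsilon> / (card I + 1)"
  have "\<delta> > 0" using \<open>\<epsilon> > 0\<close> by (simp add: \<delta>_def)
  have "\<exists>g\<in>G. b i g < (INF g\<in>G. b i g) + \<delta>" if "i \<in> I" for i
    using \<open>G \<noteq> {}\<close> bdd[OF that] \<open>\<delta> > 0\<close> by (subst cINF_less_iff[symmetric]) auto
  then obtain gs where gs: "\<And>i. i \<in> I \<Longrightarrow> gs i \<in> G \<and> b i (gs i) < (INF g\<in>G. b i g) + \<delta>"
    by metis
  have "(\<Sum>i\<in>I. b i (gs i)) \<le> (\<Sum>i\<in>I. (INF g\<in>G. b i g) + \<delta>)"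
    using gs by (intro sum_mono) (simp add: less_imp_le)
  also have "\<dots> = (\<Sum>i\<in>I. INF g\<in>G. b i g) + card I * \<delta>"
    by (simp add: sum.distrib)
  also have "card I * \<delta> < \<epsilon>"
    using \<open>\<epsilon> > 0\<close> by (simp add: \<delta>_def field_simps)
  finally show ?thesis using gs that by auto
qed

definition task_mean :: "nat \<Rightarrow> (nat \<Rightarrow> real) \<Rightarrow> real" where
  "task_mean n h = (1 / real n) * (\<Sum>i<n. h i)"

lemma task_mean_mono: "(\<And>i. i < n \<Longrightarrow> h i \<le> k i) \<Longrightarrow> task_mean n h \<le> task_mean n k"
  unfolding task_mean_def by (intro mult_left_mono sum_mono) auto

lemma task_mean_nonneg: "(\<And>i. i < n \<Longrightarrow> 0 \<le> h i) \<Longrightarrow> 0 \<le> task_mean n h"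
  using task_mean_mono[of n "\<lambda>_. 0" h] by (simp add: task_mean_def)

lemma task_mean_INF_gap_ratio_witness:
  fixes a b :: "nat \<Rightarrow> 'g \<Rightarrow> real"
  assumes "G \<noteq> {}" and a_nonneg: "\<And>i g. 0 \<le> a i g" and b_nonneg: "\<And>i g. 0 \<le> b i g"
    and "0 < \<nu>" "0 \<le> \<alpha>"
    and gap: "\<alpha> < gap_ratio \<nu> (task_mean n (\<lambda>i. INF g\<in>G. a i g)) (task_mean n (\<lambda>i. INF g\<in>G. b i g))"
  obtains gs where "\<And>i. i < n \<Longrightarrow> gs i \<in> G"
    and "\<alpha> < gap_ratio \<nu> (task_mean n (\<lambda>i. a i (gs i))) (task_mean n (\<lambda>i. b i (gs i)))"
proof -
  let ?X = "task_mean n (\<lambda>i. INF g\<in>G. a i g)" and ?Y = "task_mean n (\<lambda>i. INF g\<in>G. b i g)"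
  have bdd_a: "bdd_below (a i ` G)" and bdd_b: "bdd_below (b i ` G)" for i
    using a_nonneg b_nonneg by (auto intro: bdd_belowI[of _ 0])
  have "0 \<le> ?X" "0 \<le> ?Y"
    using \<open>G \<noteq> {}\<close> a_nonneg b_nonneg by (auto intro!: task_mean_nonneg cINF_greatest)
  then obtain \<delta> where "\<delta> > 0"
    and stable: "\<And>x' y'. ?X \<le> x' \<Longrightarrow> ?Y \<le> y' \<Longrightarrow> y' < ?Y + \<delta> \<Longrightarrow> \<alpha> < gap_ratio \<nu> x' y'"
    using gap_ratio_gt_stable[OF _ _ \<open>0 < \<nu>\<close> \<open>0 \<le> \<alpha>\<close> gap] by blast
  have "n > 0"
  proof (rule ccontr)
    assume "\<not> n > 0"
    then show False using gap \<open>0 \<le> \<alpha>\<close> by (simp add: task_mean_def gap_ratio_def)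
  qed
  then obtain gs where gs: "\<And>i. i < n \<Longrightarrow> gs i \<in> G"
    and near: "(\<Sum>i<n. b i (gs i)) < (\<Sum>i<n. INF g\<in>G. b i g) + n * \<delta>"
    using sum_INF_choice_less[of "{..<n}" G b "n * \<delta>"] \<open>G \<noteq> {}\<close> bdd_b \<open>\<delta> > 0\<close> by auto
  have "?X \<le> task_mean n (\<lambda>i. a i (gs i))" "?Y \<le> task_mean n (\<lambda>i. b i (gs i))"
    using gs bdd_a bdd_b by (auto intro!: task_mean_mono cINF_lower)
  moreover have "task_mean n (\<lambda>i. b i (gs i)) < ?Y + \<delta>"
    using near \<open>n > 0\<close> by (simp add: task_mean_def field_simps)
  ultimately show thesis using stable gs that by blast
qed

lemma task_mean_INF_d_nu_witness:
  fixes a b :: "nat \<Rightarrow> 'g \<Rightarrow> real"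
  assumes "G \<noteq> {}" and a_nonneg: "\<And>i g. 0 \<le> a i g" and b_nonneg: "\<And>i g. 0 \<le> b i g"
    and "0 < \<nu>" "0 \<le> \<alpha>"
    and gap: "\<alpha> < d_nu \<nu> (task_mean n (\<lambda>i. INF g\<in>G. a i g)) (task_mean n (\<lambda>i. INF g\<in>G. b i g))"
  obtains gs where "\<And>i. i < n \<Longrightarrow> gs i \<in> G"
    and "\<alpha> < d_nu \<nu> (task_mean n (\<lambda>i. a i (gs i))) (task_mean n (\<lambda>i. b i (gs i)))"
proof -
  have mean_nonneg: "0 \<le> task_mean n (\<lambda>i. h i (gs i))" "0 \<le> task_mean n (\<lambda>i. INF g\<in>G. h i g)"
    if "\<And>i g. 0 \<le> h i g" for h :: "nat \<Rightarrow> 'g \<Rightarrow> real" and gs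
    using that \<open>G \<noteq> {}\<close> by (auto intro!: task_mean_nonneg cINF_greatest)
  have d_nu_iff: "\<alpha> < d_nu \<nu> (task_mean n (\<lambda>i. a i (gs i))) (task_mean n (\<lambda>i. b i (gs i))) \<longleftrightarrow>
      \<alpha> < gap_ratio \<nu> (task_mean n (\<lambda>i. a i (gs i))) (task_mean n (\<lambda>i. b i (gs i))) \<or>
      \<alpha> < gap_ratio \<nu> (task_mean n (\<lambda>i. b i (gs i))) (task_mean n (\<lambda>i. a i (gs i)))" for gs
    by (intro d_nu_gt_iff_gap_ratio mean_nonneg a_nonneg b_nonneg \<open>0 < \<nu>\<close>)
  from gap consider
      "\<alpha> < gap_ratio \<nu> (task_mean n (\<lambda>i. INF g\<in>G. a i g)) (task_mean n (\<lambda>i. INF g\<in>G. b i g))"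
    | "\<alpha> < gap_ratio \<nu> (task_mean n (\<lambda>i. INF g\<in>G. b i g)) (task_mean n (\<lambda>i. INF g\<in>G. a i g))"
    by (subst (asm) d_nu_gt_iff_gap_ratio) (auto intro: mean_nonneg a_nonneg b_nonneg \<open>0 < \<nu>\<close>)
  then show thesis
  proof cases
    case 1
    with task_mean_INF_gap_ratio_witness[of G a b \<nu> \<alpha> n] assms(1-5)
    obtain gs where "\<And>i. i < n \<Longrightarrow> gs i \<in> G"
      and "\<alpha> < gap_ratio \<nu> (task_mean n (\<lambda>i. a i (gs i))) (task_mean n (\<lambda>i. b i (gs i)))"
      by blast
    then show thesis using that d_nu_iff by blast
  next
    case 2
    with task_mean_INF_gap_ratio_witness[of G b a \<nu> \<alpha> n] assms(1-5)
    obtain gs where "\<And>i. i < n \<Longrightarrow> gs i \<in> G"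
      and "\<alpha> < gap_ratio \<nu> (task_mean n (\<lambda>i. b i (gs i))) (task_mean n (\<lambda>i. a i (gs i)))"
      by blast
    then show thesis using that d_nu_iff by blast
  qed
qed

lemma Estar_d_nu_gt_imp_E_d_nu_gt:
  assumes "\<And>y a. 0 \<le> l y a" and "G \<noteq> {}" and "0 < \<nu>" "0 \<le> \<alpha>"
    and gap: "\<alpha> < d_nu \<nu> (Estar_emp l G n m f z) (Estar_true l G n f Ps)"
  shows "\<exists>gs. (\<forall>i<n. gs i \<in> G) \<and> \<alpha> < d_nu \<nu> (E_emp l n m gs f z) (E_true l n gs f Ps)"
proof -
  define a where "a i g = (1 / real m) * (\<Sum>j<m. loss_comp l g f (z (i, j)))" for i g
  define b where "b i g = (\<integral>x. loss_comp l g f x \<partial>Ps i)" for i g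
  have a_nonneg: "0 \<le> a i g" and b_nonneg: "0 \<le> b i g" for i g
    using assms(1) by (simp_all add: a_def b_def loss_comp_def sum_nonneg integral_nonneg)
  have "Estar_emp l G n m f z = task_mean n (\<lambda>i. INF g\<in>G. a i g)"
    "Estar_true l G n f Ps = task_mean n (\<lambda>i. INF g\<in>G. b i g)"
    by (simp_all add: Estar_emp_def Estar_true_def task_mean_def a_def b_def)
  with gap obtain gs where "\<And>i. i < n \<Longrightarrow> gs i \<in> G"
    and "\<alpha> < d_nu \<nu> (task_mean n (\<lambda>i. a i (gs i))) (task_mean n (\<lambda>i. b i (gs i)))"
    using task_mean_INF_d_nu_witness[of G a b, OF assms(2) a_nonneg b_nonneg assms(3,4)] by auto
  moreover have "E_emp l n m gs f z = task_mean n (\<lambda>i. a i (gs i))"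
    "E_true l n gs f Ps = task_mean n (\<lambda>i. b i (gs i))"
    by (simp_all add: E_emp_def E_true_def task_mean_def a_def b_def sum_distrib_left)
  ultimately show ?thesis by (intro exI[of _ gs]) simp
qed

text \<open>Unlike \<^const>\<open>subprob_space\<close>-based results on binds, this needs no measurability of the
  kernel f, which is not available for \<^const>\<open>nm_sampling\<close>.\<close>

lemma emeasure_bind_le_space: "emeasure (M \<bind> f) X \<le> emeasure M (space M)"
proof (cases "space M = {}")
  case True
  then show ?thesis using emeasure_space[of "count_space {}" X] by (simp add: bind_empty)
next
  case False
  define D where "D = distr M (subprob_algebra (f (SOME x. x \<in> space M))) f"
  have "emeasure (M \<bind> f) X = emeasure (join D) X"
    using False by (simp add: bind_nonempty D_def)
  also have "\<dots> \<le> (\<integral>\<^sup>+ N. emeasure N X \<partial>D)"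
    unfolding join_def emeasure_measure_of_conv by simp
  also have "\<dots> \<le> (\<integral>\<^sup>+ N. 1 \<partial>D)"
    by (intro nn_integral_mono subprob_space.subprob_emeasure_le_1)
      (simp add: D_def space_subprob_algebra)
  also have "\<dots> = emeasure D (space D)"
    by simp
  also have "\<dots> \<le> emeasure M (f -` space D \<inter> space M)"
    unfolding D_def distr_def emeasure_measure_of_conv by simp
  also have "\<dots> \<le> emeasure M (space M)"
    by (rule emeasure_space)
  finally show ?thesis .
qed

lemma emeasure_nm_sampling_le_1:
  assumes "prob_space Q"
  shows "emeasure (nm_sampling Mz Q n m) X \<le> 1"
proof -
  interpret prob_space "PiM {..<n} (\<lambda>_. Q)"
    using assms by (intro prob_space_PiM) auto
  have "emeasure (nm_sampling Mz Q n m) X \<le> emeasure (PiM {..<n} (\<lambda>_. Q)) (space (PiM {..<n} (\<lambda>_. Q)))"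
    unfolding nm_sampling_def by (rule emeasure_bind_le_space)
  then show ?thesis by (simp add: emeasure_space_1)
qed

lemma fmeasurable_nm_sampling:
  assumes "prob_space Q" and "X \<in> sets (nm_sampling Mz Q n m)"
  shows "X \<in> fmeasurable (nm_sampling Mz Q n m)"
  using le_less_trans[OF emeasure_nm_sampling_le_1[OF assms(1)] ennreal_one_less_top]
  by (intro fmeasurableI[OF assms(2)]) simp

lemma space_nm_sampling_subset:
  assumes "Q \<in> space (prob_algebra (prob_algebra Mz))"
  shows "space (nm_sampling Mz Q n m) \<subseteq> space (sample_space Mz Q n m)"
proof (cases "space (PiM {..<n} (\<lambda>_. Q)) = {}")
  case True
  then show ?thesis by (simp add: nm_sampling_def bind_empty)
next
  case False
  have space_Q: "space Q = space (prob_algebra Mz)"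
    using assms by (intro sets_eq_imp_space_eq) (simp add: space_prob_algebra)
  have "space (PiM ({..<n} \<times> {..<m}) (\<lambda>ij. Ps (fst ij))) \<noteq> {}"
    if "Ps \<in> space (PiM {..<n} (\<lambda>_. Q))" for Ps
  proof -
    have "prob_space (Ps i)" if "i < n" for i
      using \<open>Ps \<in> _\<close> that space_Q by (auto simp: space_PiM space_prob_algebra)
    then show ?thesis
      by (auto simp: space_PiM PiE_eq_empty_iff dest: prob_space.not_empty)
  qed
  then have "space (nm_sampling Mz Q n m) = space (sample_space Mz Q n m)"
    unfolding nm_sampling_def using False by (intro space_bind sets_bind) auto
  then show ?thesis by simp
qed

theorem lemma3p3:
  fixes Mz :: "('x \<times> 'y) measure"
    and Q :: "('x \<times> 'y) measure measure"
    and F :: "('x \<Rightarrow> 'v) set"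
    and G :: "('v \<Rightarrow> 'a) set"
    and l :: "'y \<Rightarrow> 'a \<Rightarrow> real"
    and M :: real
    and A :: "nat \<Rightarrow> nat \<Rightarrow> (nat \<times> nat \<Rightarrow> 'x \<times> 'y) \<Rightarrow> ('x \<Rightarrow> 'v)"
    and n m :: nat
    and \<alpha> \<nu> :: real
  assumes Q_env: "Q \<in> space (prob_algebra (prob_algebra Mz))"
    and l_range: "\<And>y a. 0 \<le> l y a \<and> l y a \<le> M"
    and l_meas: "\<And>f g. f \<in> F \<Longrightarrow> g \<in> G \<Longrightarrow> loss_comp l g f \<in> borel_measurable Mz"
    and G_ne: "G \<noteq> {}"
    and A_F: "\<And>n m z. 1 \<le> n \<Longrightarrow> 1 \<le> m \<Longrightarrow>
                 z \<in> space (PiM ({..<n} \<times> {..<m}) (\<lambda>_. Mz)) \<Longrightarrow> A n m z \<in> F"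
    and n_pos: "1 \<le> n" and m_pos: "1 \<le> m"
    and \<alpha>_pos: "\<alpha> > 0" and \<nu>_pos: "\<nu> > 0"
    and meas1: "{(z, Ps) \<in> space (nm_sampling Mz Q n m).
                   d_nu \<nu> (Estar_emp l G n m (A n m z) z) (Estar_true l G n (A n m z) Ps) > \<alpha>}
                 \<in> sets (nm_sampling Mz Q n m)"
    and meas2: "{(z, Ps) \<in> space (nm_sampling Mz Q n m).
                   \<exists>gs. (\<forall>i<n. gs i \<in> G) \<and> (\<exists>f\<in>F.
                     d_nu \<nu> (E_emp l n m gs f z) (E_true l n gs f Ps) > \<alpha>)}
                 \<in> sets (nm_sampling Mz Q n m)"
  shows "measure (nm_sampling Mz Q n m)
           {(z, Ps) \<in> space (nm_sampling Mz Q n m).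
              d_nu \<nu> (Estar_emp l G n m (A n m z) z) (Estar_true l G n (A n m z) Ps) > \<alpha>}
         \<le> measure (nm_sampling Mz Q n m)
           {(z, Ps) \<in> space (nm_sampling Mz Q n m).
              \<exists>gs. (\<forall>i<n. gs i \<in> G) \<and> (\<exists>f\<in>F.
                d_nu \<nu> (E_emp l n m gs f z) (E_true l n gs f Ps) > \<alpha>)}"
proof -
  have "prob_space Q" using Q_env by (simp add: space_prob_algebra)
  show ?thesis
  proof (rule measure_mono_fmeasurable[OF _ meas1 fmeasurable_nm_sampling[OF \<open>prob_space Q\<close> meas2]],
      clarsimp)
    fix z Ps
    assume sample: "(z, Ps) \<in> space (nm_sampling Mz Q n m)"
      and gap: "\<alpha> < d_nu \<nu> (Estar_emp l G n m (A n m z) z) (Estar_true l G n (A n m z) Ps)"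
    have "z \<in> space (PiM ({..<n} \<times> {..<m}) (\<lambda>_. Mz))"
      using sample space_nm_sampling_subset[OF Q_env]
      by (auto simp: sample_space_def space_pair_measure)
    then have "A n m z \<in> F" using A_F n_pos m_pos by blast
    moreover obtain gs where "\<forall>i<n. gs i \<in> G"
      and "\<alpha> < d_nu \<nu> (E_emp l n m gs (A n m z) z) (E_true l n gs (A n m z) Ps)"
      using Estar_d_nu_gt_imp_E_d_nu_gt[OF _ G_ne \<nu>_pos _ gap] l_range \<alpha>_pos by auto
    ultimately show "\<exists>gs. (\<forall>i<n. gs i \<in> G) \<and>
        (\<exists>f\<in>F. \<alpha> < d_nu \<nu> (E_emp l n m gs f z) (E_true l n gs f Ps))"
      by blast
  qed
qed

end
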